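(* For every $n\in\mathbb{N}$, the Fibonacci-sum set-graph $G^F_{A^{(n)}}$ has no pendant vertices (i.e. no vertex of degree exactly $1$).
   Context: Let $\mathcal{F}=\{f_m\}_{m\ge 0}$ be the Fibonacci numbers, $f_0=0$, $f_1=1$, $f_m=f_{m-1}+f_{m-2}$. For $n\in\mathbb{N}$ let $A^{(n)}=\{1,2,\dots,n\}$. The Fibonacci-sum set-graph $G^F_{A^{(n)}}$ is the multigraph (loops and multiple edges allowed) whose vertices are in bijection with the nonempty subsets of $A^{(n)}$ (so it has $2^n-1$ vertices); between the vertices corresponding to distinct subsets $S,T$ there is one edge for each pair $(i',j')$ with $i'\in S$, $j'\in T$, $i'\neq j'$ and $i'+j'\in\mathcal{F}$, and at the vertex corresponding to $S$ there is one loop for each pair of distinct elements $i',j'\in S$ with $i'+j'\in\mathcal{F}$. The degree of a vertex $v$ is $2l(v)+\sum_{u\neq v}\epsilon(v,u)$, where $l(v)$ is the number of loops at $v$ and $\epsilon(v,u)$ the number of edges between $v$ and $u$. *)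

theory Defs
  imports "HOL-Number_Theory.Fib"
begin

definition fib_numbers :: "nat set" where
  "fib_numbers = range fib"

text \<open>Vertices of the Fibonacci-sum set-graph on A^(n) = {1..n}: nonempty subsets.\<close>
definition fs_vertices :: "nat \<Rightarrow> nat set set" where
  "fs_vertices n = {S. S \<subseteq> {1..n} \<and> S \<noteq> {}}"

definition fs_edges :: "nat set \<Rightarrow> nat set \<Rightarrow> nat" where
  "fs_edges S T = card {(i, j). i \<in> S \<and> j \<in> T \<and> i \<noteq> j \<and> i + j \<in> fib_numbers}"

definition fs_loops :: "nat set \<Rightarrow> nat" where
  "fs_loops S = card {{i, j} | i j. i \<in> S \<and> j \<in> S \<and> i \<noteq> j \<and> i + j \<in> fib_numbers}"

definition fs_degree :: "nat \<Rightarrow> nat set \<Rightarrow> nat" where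
  "fs_degree n S = 2 * fs_loops S + (\<Sum>T \<in> fs_vertices n - {S}. fs_edges S T)"

end

theory Submission
  imports Defs
begin

text \<open>If some element i of a vertex S has a Fibonacci partner j in {1..n}, then either
  j is in S, giving a loop (which counts twice), or the two distinct vertices {j} and {i, j}
  both differ from S and are each joined to S. Otherwise S has no loops and no edges at all.
  Either way the degree is never 1.\<close>

lemma finite_fs_vertices: "finite (fs_vertices n)"
  unfolding fs_vertices_def by (rule finite_subset[of _ "Pow {1..n}"]) auto

lemma fs_edges_pos:
  assumes "finite S" "finite T" "i \<in> S" "j \<in> T" "i \<noteq> j" "i + j \<in> fib_numbers"
  shows "0 < fs_edges S T"
proof -
  let ?P = "{(i, j). i \<in> S \<and> j \<in> T \<and> i \<noteq> j \<and> i + j \<in> fib_numbers}"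
  have "finite ?P"
    by (rule finite_subset[of _ "S \<times> T"]) (use assms in auto)
  moreover have "(i, j) \<in> ?P"
    using assms by auto
  ultimately show ?thesis
    unfolding fs_edges_def by (auto simp: card_gt_0_iff)
qed

lemma fs_edges_eq_0:
  assumes "\<forall>i\<in>S. \<forall>j\<in>T. i \<noteq> j \<longrightarrow> i + j \<notin> fib_numbers"
  shows "fs_edges S T = 0"
proof -
  have "{(i, j). i \<in> S \<and> j \<in> T \<and> i \<noteq> j \<and> i + j \<in> fib_numbers} = {}"
    using assms by blast
  then show ?thesis
    unfolding fs_edges_def by (metis card.empty)
qed

lemma fs_loops_pos:
  assumes "finite S" "i \<in> S" "j \<in> S" "i \<noteq> j" "i + j \<in> fib_numbers"
  shows "0 < fs_loops S"
proof -
  let ?L = "{{i, j} | i j. i \<in> S \<and> j \<in> S \<and> i \<noteq> j \<and> i + j \<in> fib_numbers}"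
  have "finite ?L"
    by (rule finite_subset[of _ "Pow S"]) (use assms in auto)
  moreover have "{i, j} \<in> ?L"
    using assms by blast
  ultimately show ?thesis
    unfolding fs_loops_def by (auto simp: card_gt_0_iff)
qed

lemma fs_loops_eq_0:
  assumes "\<forall>i\<in>S. \<forall>j\<in>S. i \<noteq> j \<longrightarrow> i + j \<notin> fib_numbers"
  shows "fs_loops S = 0"
proof -
  have "{{i, j} | i j. i \<in> S \<and> j \<in> S \<and> i \<noteq> j \<and> i + j \<in> fib_numbers} = {}"
    using assms by blast
  then show ?thesis
    unfolding fs_loops_def by (metis card.empty)
qed

lemma fs_degree_eq_0:
  assumes "S \<in> fs_vertices n" "\<forall>i\<in>S. \<forall>j\<in>{1..n}. i \<noteq> j \<longrightarrow> i + j \<notin> fib_numbers"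
  shows "fs_degree n S = 0"
proof -
  have S: "S \<subseteq> {1..n}"
    using assms(1) unfolding fs_vertices_def by auto
  have "fs_loops S = 0"
    using assms(2) S by (intro fs_loops_eq_0) blast
  moreover have "fs_edges S T = 0" if "T \<in> fs_vertices n - {S}" for T
    using that assms(2) unfolding fs_vertices_def by (intro fs_edges_eq_0) blast
  ultimately show ?thesis
    unfolding fs_degree_def by simp
qed

lemma fs_degree_ge_2:
  assumes "S \<in> fs_vertices n" "i \<in> S" "j \<in> {1..n}" "i \<noteq> j" "i + j \<in> fib_numbers"
  shows "2 \<le> fs_degree n S"
proof -
  have S: "S \<subseteq> {1..n}" and fin: "finite S"
    using assms(1) finite_subset unfolding fs_vertices_def by auto
  show ?thesis
  proof (cases "j \<in> S")
    case True
    then have "0 < fs_loops S"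
      using assms fin by (intro fs_loops_pos) auto
    then show ?thesis
      unfolding fs_degree_def by simp
  next
    case False
    have nbrs: "{{j}, {i, j}} \<subseteq> fs_vertices n - {S}"
      using False assms S unfolding fs_vertices_def by auto
    have "0 < fs_edges S {j}" and "0 < fs_edges S {i, j}"
      using assms fin by (auto intro: fs_edges_pos)
    moreover have "{j} \<noteq> {i, j}"
      using assms(4) by auto
    ultimately have "2 \<le> (\<Sum>T\<in>{{j}, {i, j}}. fs_edges S T)"
      by simp
    also have "\<dots> \<le> (\<Sum>T \<in> fs_vertices n - {S}. fs_edges S T)"
      by (rule sum_mono2) (use nbrs finite_fs_vertices in auto)
    finally show ?thesis
      unfolding fs_degree_def by simp
  qed
qed

theorem theorem2p1:
  fixes n :: nat
  shows "\<forall>S \<in> fs_vertices n. fs_degree n S \<noteq> 1"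
proof
  fix S assume S: "S \<in> fs_vertices n"
  show "fs_degree n S \<noteq> 1"
  proof (cases "\<exists>i\<in>S. \<exists>j\<in>{1..n}. i \<noteq> j \<and> i + j \<in> fib_numbers")
    case True
    then show ?thesis
      using S fs_degree_ge_2 by fastforce
  next
    case False
    then show ?thesis
      using S fs_degree_eq_0 by fastforce
  qed
qed

end
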